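(* Let $k$ be an algebraically closed field and $\ell\neq\mathrm{char}(k)$ a prime. Then: (a) An element of $\mathrm{Aut}(\mathbb P^1_k)$ is parabolic if and only if it is uniquely $\ell$-divisible. (b) A subgroup of $\mathrm{Aut}(\mathbb P^1_k)$ is the stabiliser of some point $P\in\mathbb P^1(k)$ if and only if it is the normaliser of the centraliser of some parabolic element.
   Context: An automorphism of $\mathbb P^1_k$ is parabolic if it has exactly one fixed point in $\mathbb P^1(k)$. An element $x$ of a group $G$ is uniquely $\ell$-divisible if there is exactly one $y\in G$ with $y^\ell=x$. *)

theory Defs
  imports "HOL-Algebra.Group_Action" "HOL-Computational_Algebra.Polynomial"
begin

definition alg_closed :: "'k::field itself \<Rightarrow> bool" where
  "alg_closed _ \<longleftrightarrow> (\<forall>p :: 'k poly. degree p > 0 \<longrightarrow> (\<exists>x. poly p x = 0))"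

text \<open>A point of P^1(k) is the set of nonzero representatives of a line through the origin.\<close>
definition proj_pt :: "'k::field \<times> 'k \<Rightarrow> ('k \<times> 'k) set" where
  "proj_pt v = {(t * fst v, t * snd v) | t. t \<noteq> 0}"

definition P1 :: "('k::field \<times> 'k) set set" where
  "P1 = {proj_pt v | v. v \<noteq> (0, 0)}"

definition mat_apply :: "'k::field \<times> 'k \<times> 'k \<times> 'k \<Rightarrow> ('k \<times> 'k) set \<Rightarrow> ('k \<times> 'k) set" where
  "mat_apply M p = (case M of (a, b, c, d) \<Rightarrow> {(a * x + b * y, c * x + d * y) | x y. (x, y) \<in> p})"

definition mobius :: "'k::field \<times> 'k \<times> 'k \<times> 'k \<Rightarrow> ('k \<times> 'k) set \<Rightarrow> ('k \<times> 'k) set" where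
  "mobius M = restrict (mat_apply M) P1"

text \<open>Aut(P^1_k) = PGL_2(k), realised faithfully as the group of induced bijections of P^1(k).\<close>
definition Aut_P1 :: "(('k::field \<times> 'k) set \<Rightarrow> ('k \<times> 'k) set) monoid" where
  "Aut_P1 = \<lparr> carrier = {mobius (a, b, c, d) | a b c d. a * d - b * c \<noteq> 0},
             monoid.mult = (\<lambda>f g. restrict (f \<circ> g) P1),
             one = restrict id P1 \<rparr>"

definition fixed_points :: "(('k::field \<times> 'k) set \<Rightarrow> ('k \<times> 'k) set) \<Rightarrow> ('k \<times> 'k) set set" where
  "fixed_points f = {P \<in> P1. f P = P}"

definition parabolic :: "(('k::field \<times> 'k) set \<Rightarrow> ('k \<times> 'k) set) \<Rightarrow> bool" where
  "parabolic f \<longleftrightarrow> f \<in> carrier (Aut_P1 :: (('k \<times> 'k) set \<Rightarrow> ('k \<times> 'k) set) monoid)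
                   \<and> card (fixed_points f) = 1"

definition uniquely_divisible :: "('a, 'b) monoid_scheme \<Rightarrow> nat \<Rightarrow> 'a \<Rightarrow> bool" where
  "uniquely_divisible G l x \<longleftrightarrow> (\<exists>!y. y \<in> carrier G \<and> y [^]\<^bsub>G\<^esub> l = x)"

definition centralizer :: "('a, 'b) monoid_scheme \<Rightarrow> 'a set \<Rightarrow> 'a set" where
  "centralizer G S = {g \<in> carrier G. \<forall>s \<in> S. g \<otimes>\<^bsub>G\<^esub> s = s \<otimes>\<^bsub>G\<^esub> g}"

end

theory Submission
  imports Defs
begin

text \<open>
  Over an algebraically closed field every matrix in \<open>GL\<^sub>2\<close> has an eigenvector, so a
  Moebius transformation other than the identity is either induced by a matrix with two
  distinct eigenvalues, and then has exactly two fixed points, or by a scalar multiple of a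
  transvection \<open>w \<mapsto> w - c \<cdot> cross v w \<cdot> v\<close>, which fixes only \<open>[v]\<close>.

  The transvections along \<open>v\<close> form a group isomorphic to \<open>(k, +)\<close>, and together with the
  identity they are precisely the centraliser of any one of them, \<open>f\<close> say: whatever commutes
  with \<open>f\<close> fixes the unique fixed point \<open>[v]\<close> of \<open>f\<close>, and if it had a second fixed point,
  \<open>f\<close> would permute the two, fix \<open>[v]\<close> and hence fix both. An \<open>l\<close>-th root of \<open>f\<close> commutes with \<open>f\<close>,
  so it lies in this copy of \<open>(k, +)\<close>, where taking \<open>l\<close>-th roots is division by \<open>l\<close>.
  Conversely, with \<open>\<zeta> \<noteq> 1\<close> an \<open>l\<close>-th root of unity, the identity has the two \<open>l\<close>-th roots
  \<open>id\<close> and \<open>diag(\<zeta>, 1)\<close>, and a matrix with eigenvalues \<open>\<lambda> \<noteq> \<mu>\<close> has \<open>l\<close>-th roots with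
  eigenvalues \<open>(r, q)\<close> and \<open>(\<zeta> r, q)\<close>, where \<open>r\<^sup>l = \<lambda>\<close> and \<open>q\<^sup>l = \<mu>\<close>; they induce different
  transformations because the ratio of the eigenvalues is unchanged by rescaling.

  Conjugation by \<open>g\<close> moves fixed points by \<open>g\<close>, so \<open>g\<close> normalises the centraliser of a
  parabolic element with fixed point \<open>P\<close> exactly when \<open>g\<close> fixes \<open>P\<close>.
\<close>

section \<open>\<open>2 \<times> 2\<close> matrices\<close>

type_synonym 'k mat = "'k \<times> 'k \<times> 'k \<times> 'k"

fun mat_mult :: "'k::field mat \<Rightarrow> 'k mat \<Rightarrow> 'k mat" where
  "mat_mult (a, b, c, d) (e, f, g, h) = (a*e + b*g, a*f + b*h, c*e + d*g, c*f + d*h)"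

fun mat_det :: "'k::field mat \<Rightarrow> 'k" where
  "mat_det (a, b, c, d) = a*d - b*c"

fun mat_trace :: "'k::field mat \<Rightarrow> 'k" where
  "mat_trace (a, b, c, d) = a + d"

fun mat_vec :: "'k::field mat \<Rightarrow> 'k \<times> 'k \<Rightarrow> 'k \<times> 'k" where
  "mat_vec (a, b, c, d) (x, y) = (a*x + b*y, c*x + d*y)"

fun mat_adj :: "'k::field mat \<Rightarrow> 'k mat" where
  "mat_adj (a, b, c, d) = (d, -b, -c, a)"

fun mat_smult :: "'k::field \<Rightarrow> 'k mat \<Rightarrow> 'k mat" where
  "mat_smult t (a, b, c, d) = (t*a, t*b, t*c, t*d)"

definition mat_one :: "'k::field mat" where
  "mat_one = (1, 0, 0, 1)"

fun mat_pow :: "'k::field mat \<Rightarrow> nat \<Rightarrow> 'k mat" where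
  "mat_pow M 0 = mat_one"
| "mat_pow M (Suc n) = mat_mult (mat_pow M n) M"

fun cross :: "'k::field \<times> 'k \<Rightarrow> 'k \<times> 'k \<Rightarrow> 'k" where
  "cross (x1, y1) (x2, y2) = x1*y2 - y1*x2"

abbreviation vscale :: "'k::field \<Rightarrow> 'k \<times> 'k \<Rightarrow> 'k \<times> 'k" where
  "vscale t v \<equiv> (t * fst v, t * snd v)"

lemma vscale_cancel: "v \<noteq> (0, 0) \<Longrightarrow> vscale a v = vscale b v \<Longrightarrow> a = b"
  by (cases v) auto

lemma mat_vec_mult: "mat_vec (mat_mult A B) v = mat_vec A (mat_vec B v)"
  by (cases A, cases B, cases v) (auto simp: algebra_simps)

lemma mat_det_mult: "mat_det (mat_mult A B) = mat_det A * mat_det B"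
  by (cases A, cases B) (auto simp: algebra_simps)

lemma mat_mult_assoc: "mat_mult (mat_mult A B) C = mat_mult A (mat_mult B C)"
  by (cases A, cases B, cases C) (auto simp: algebra_simps)

lemma mat_mult_one [simp]: "mat_mult mat_one A = A" "mat_mult A mat_one = A"
  by (cases A, simp add: mat_one_def)+

lemma mat_vec_one [simp]: "mat_vec mat_one v = v"
  by (cases v) (simp add: mat_one_def)

lemma mat_det_one [simp]: "mat_det mat_one = 1"
  by (simp add: mat_one_def)

lemma mat_adj_mult: "mat_mult (mat_adj A) A = mat_smult (mat_det A) mat_one"
  by (cases A) (auto simp: mat_one_def algebra_simps)

lemma mat_det_adj: "mat_det (mat_adj A) = mat_det A"
  by (cases A) (auto simp: algebra_simps)

lemma mat_det_pow: "mat_det (mat_pow M n) = mat_det M ^ n"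
  by (induction n) (simp_all add: mat_det_mult)

lemma mat_vec_scale: "mat_vec M (vscale t v) = vscale t (mat_vec M v)"
  by (cases M, cases v) (simp add: algebra_simps)

lemma mat_vec_smult: "mat_vec (mat_smult t A) v = vscale t (mat_vec A v)"
  by (cases A, cases v) (simp add: algebra_simps)

lemma mat_vec_pow_eigenvector:
  assumes "mat_vec M v = vscale r v"
  shows "mat_vec (mat_pow M n) v = vscale (r ^ n) v"
proof (induction n)
  case (Suc n)
  have "mat_vec (mat_pow M (Suc n)) v = mat_vec (mat_pow M n) (vscale r v)"
    using assms by (simp add: mat_vec_mult)
  also have "\<dots> = vscale (r * r ^ n) v"
    using Suc by (simp add: mat_vec_scale algebra_simps)
  finally show ?case by simp
qed simp

lemma mat_det_eq_0_if_kernel: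
  assumes "mat_vec A v = (0, 0)" "v \<noteq> (0, 0)"
  shows "mat_det A = 0"
proof -
  obtain p q r s where A: "A = (p, q, r, s)" by (cases A)
  obtain x y where v: "v = (x, y)" by (cases v)
  have "p*x + q*y = 0" "r*x + s*y = 0" using assms A v by auto
  then have "(p*s - q*r) * x = 0" "(p*s - q*r) * y = 0" by algebra+
  then show ?thesis using A v assms(2) by auto
qed

lemma mat_vec_nonzero: "mat_det M \<noteq> 0 \<Longrightarrow> v \<noteq> (0, 0) \<Longrightarrow> mat_vec M v \<noteq> (0, 0)"
  using mat_det_eq_0_if_kernel by blast

lemma kernel_exists_if_mat_det_eq_0:
  fixes p q r s :: "'k::field"
  assumes "p*s - q*r = 0"
  obtains v where "v \<noteq> (0, 0)" "mat_vec (p, q, r, s) v = (0, 0)"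
proof (cases "(p, q) = (0, 0)")
  case True
  show ?thesis
  proof (cases "(r, s) = (0, 0)")
    case False
    with \<open>(p, q) = (0, 0)\<close> show ?thesis by (intro that[of "(s, -r)"]) (auto simp: algebra_simps)
  qed (use True that[of "(1, 0)"] in auto)
next
  case False
  then show ?thesis using assms by (intro that[of "(q, -p)"]) (auto simp: algebra_simps)
qed

lemma cross_eq_0_if_common_kernel:
  fixes p q r s :: "'k::field"
  assumes "(p, q, r, s) \<noteq> (0, 0, 0, 0)"
    and "mat_vec (p, q, r, s) v = (0, 0)" "mat_vec (p, q, r, s) w = (0, 0)"
  shows "cross v w = 0"
proof -
  obtain v1 v2 where v: "v = (v1, v2)" by (cases v)
  obtain w1 w2 where w: "w = (w1, w2)" by (cases w)
  have "p*v1 + q*v2 = 0" "r*v1 + s*v2 = 0" "p*w1 + q*w2 = 0" "r*w1 + s*w2 = 0"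
    using assms(2,3) v w by auto
  then have "p * (v1*w2 - v2*w1) = 0" "q * (v1*w2 - v2*w1) = 0"
    "r * (v1*w2 - v2*w1) = 0" "s * (v1*w2 - v2*w1) = 0"
    by algebra+
  then show ?thesis using assms(1) v w by auto
qed

lemma cross_eq_0_imp_parallel:
  assumes "v \<noteq> (0, 0)" "cross v w = 0"
  obtains t where "w = vscale t v"
proof -
  obtain v1 v2 where v: "v = (v1, v2)" by (cases v)
  obtain w1 w2 where w: "w = (w1, w2)" by (cases w)
  have c: "v1*w2 = v2*w1" using assms v w by simp
  show ?thesis
  proof (cases "v1 = 0")
    case True
    then have "v2 \<noteq> 0" using assms v by auto
    then show ?thesis using c True v w by (intro that[of "w2/v2"]) (auto simp: field_simps)
  next
    case False
    then show ?thesis using c v w by (intro that[of "w1/v1"]) (auto simp: field_simps)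
  qed
qed

lemma mat_eq_if_agree_on_basis:
  fixes A B :: "'k::field mat"
  assumes "cross v1 v2 \<noteq> 0" "mat_vec A v1 = mat_vec B v1" "mat_vec A v2 = mat_vec B v2"
  shows "A = B"
proof (rule ccontr)
  assume "A \<noteq> B"
  obtain a b c d where A: "A = (a, b, c, d)" by (cases A)
  obtain a' b' c' d' where B: "B = (a', b', c', d')" by (cases B)
  have "(a - a', b - b', c - c', d - d') \<noteq> (0, 0, 0, 0)" using \<open>A \<noteq> B\<close> A B by auto
  moreover have "mat_vec (a - a', b - b', c - c', d - d') v1 = (0, 0)"
    "mat_vec (a - a', b - b', c - c', d - d') v2 = (0, 0)"
    using assms(2,3) A B by (cases v1, cases v2, simp add: algebra_simps)+
  ultimately show False using cross_eq_0_if_common_kernel assms(1) by blast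
qed

section \<open>The projective line and its automorphism group\<close>

lemma proj_pt_eq_iff:
  "proj_pt u = proj_pt (v::'k::field \<times> 'k) \<longleftrightarrow> (\<exists>t. t \<noteq> 0 \<and> u = vscale t v)"
proof
  assume h: "proj_pt u = proj_pt v"
  have "v \<in> proj_pt v" unfolding proj_pt_def by (cases v) (auto intro: exI[of _ 1])
  with h obtain s where "s \<noteq> 0" "v = vscale s u" unfolding proj_pt_def by auto
  then show "\<exists>t. t \<noteq> 0 \<and> u = vscale t v"
    by (intro exI[of _ "inverse s"]) (cases u, auto simp: field_simps)
next
  assume "\<exists>t. t \<noteq> 0 \<and> u = vscale t v"
  then obtain t where t: "t \<noteq> 0" "u = vscale t v" by blast
  have "z \<in> proj_pt u \<longleftrightarrow> z \<in> proj_pt v" for z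
  proof
    assume "z \<in> proj_pt u"
    then obtain s where "s \<noteq> 0" "z = vscale s u" unfolding proj_pt_def by auto
    then show "z \<in> proj_pt v" using t unfolding proj_pt_def
      by (auto intro!: exI[of _ "s*t"] simp: algebra_simps)
  next
    assume "z \<in> proj_pt v"
    then obtain s where "s \<noteq> 0" "z = vscale s v" unfolding proj_pt_def by auto
    then show "z \<in> proj_pt u" using t unfolding proj_pt_def
      by (auto intro!: exI[of _ "s/t"] simp: algebra_simps)
  qed
  then show "proj_pt u = proj_pt v" by blast
qed

lemma proj_pt_eq_if_cross_eq_0:
  assumes "v \<noteq> (0, 0)" "w \<noteq> (0, 0)" "cross v w = 0"
  shows "proj_pt w = proj_pt v"
proof -
  obtain t where t: "w = vscale t v" using cross_eq_0_imp_parallel assms(1,3) by blast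
  then have "t \<noteq> 0" using assms(2) by auto
  then show ?thesis using t proj_pt_eq_iff by blast
qed

lemma proj_pt_neq_if_cross_ne_0: "cross v w \<noteq> 0 \<Longrightarrow> proj_pt v \<noteq> proj_pt w"
  by (cases v, cases w) (auto simp: proj_pt_eq_iff algebra_simps)

lemma mat_apply_proj_pt: "mat_apply M (proj_pt v) = proj_pt (mat_vec M v)"
proof -
  obtain a b c d where M: "M = (a, b, c, d)" by (cases M)
  obtain x y where v: "v = (x, y)" by (cases v)
  have "z \<in> mat_apply M (proj_pt v) \<longleftrightarrow> z \<in> proj_pt (mat_vec M v)" for z
  proof
    assume "z \<in> mat_apply M (proj_pt v)"
    then obtain t where "t \<noteq> 0" "z = (a*(t*x) + b*(t*y), c*(t*x) + d*(t*y))"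
      unfolding M v mat_apply_def proj_pt_def by auto
    then have "z = vscale t (mat_vec M v)" using M v by (simp add: algebra_simps)
    then show "z \<in> proj_pt (mat_vec M v)" unfolding proj_pt_def using \<open>t \<noteq> 0\<close> by blast
  next
    assume "z \<in> proj_pt (mat_vec M v)"
    then obtain t where "t \<noteq> 0" "z = (t*(a*x + b*y), t*(c*x + d*y))"
      unfolding M v proj_pt_def by auto
    then have "(t*x, t*y) \<in> proj_pt v" "z = (a*(t*x) + b*(t*y), c*(t*x) + d*(t*y))"
      unfolding v proj_pt_def by (auto simp: algebra_simps)
    then show "z \<in> mat_apply M (proj_pt v)" unfolding M mat_apply_def by blast
  qed
  then show ?thesis by blast
qed

lemma P1_iff: "P \<in> P1 \<longleftrightarrow> (\<exists>v. v \<noteq> (0, 0) \<and> P = proj_pt v)"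
  unfolding P1_def by auto

lemma proj_pt_in_P1 [simp]: "v \<noteq> (0, 0) \<Longrightarrow> proj_pt v \<in> P1"
  unfolding P1_def by blast

lemma mobius_proj_pt: "v \<noteq> (0, 0) \<Longrightarrow> mobius M (proj_pt v) = proj_pt (mat_vec M v)"
  unfolding mobius_def by (simp add: mat_apply_proj_pt)

lemma mobius_in_P1:
  assumes "mat_det M \<noteq> 0" "P \<in> P1"
  shows "mobius M P \<in> P1"
proof -
  obtain v where "v \<noteq> (0, 0)" "P = proj_pt v" using assms(2) by (auto simp: P1_iff)
  then show ?thesis using mat_vec_nonzero[OF assms(1)] by (simp add: mobius_proj_pt)
qed

lemma mobius_eqI:
  assumes "\<And>v. v \<noteq> (0, 0) \<Longrightarrow> mobius A (proj_pt v) = mobius B (proj_pt v)"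
  shows "mobius A = mobius B"
proof -
  have "mobius A P = mobius B P" if "P \<in> P1" for P using assms that by (auto simp: P1_iff)
  then show ?thesis unfolding mobius_def by (intro restrict_ext) simp
qed

lemma mobius_mult:
  "mat_det B \<noteq> 0 \<Longrightarrow> restrict (mobius A \<circ> mobius B) P1 = mobius (mat_mult A B)"
  unfolding mobius_def[of "mat_mult A B"]
  by (rule restrict_ext) (auto simp: P1_iff mobius_proj_pt mat_vec_mult mat_vec_nonzero mat_apply_proj_pt)

lemma mobius_one: "mobius mat_one = restrict id P1"
  unfolding mobius_def by (rule restrict_ext) (auto simp: P1_iff mat_apply_proj_pt)

lemma mobius_smult: "t \<noteq> 0 \<Longrightarrow> mobius (mat_smult t A) = mobius A"
  by (rule mobius_eqI) (auto simp: mobius_proj_pt mat_vec_smult proj_pt_eq_iff)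

lemma mobius_eq_imp_smult:
  fixes A B :: "'k::field mat"
  assumes "mat_det A \<noteq> 0" and "mobius A = mobius B"
  obtains t where "B = mat_smult t A"
proof -
  obtain a b c d where A: "A = (a, b, c, d)" by (cases A)
  obtain a' b' c' d' where B: "B = (a', b', c', d')" by (cases B)
  have scale: "\<exists>t. mat_vec B w = vscale t (mat_vec A w)" if "w \<noteq> (0, 0)" for w
  proof -
    have "proj_pt (mat_vec B w) = proj_pt (mat_vec A w)"
      using assms(2) mobius_proj_pt[OF that] by metis
    then show ?thesis using proj_pt_eq_iff by metis
  qed
  obtain t1 where t1: "a' = t1 * a" "c' = t1 * c" using scale[of "(1, 0)"] A B by auto
  obtain t2 where t2: "b' = t2 * b" "d' = t2 * d" using scale[of "(0, 1)"] A B by auto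
  obtain t3 where t3: "a' + b' = t3 * (a + b)" "c' + d' = t3 * (c + d)"
    using scale[of "(1, 1)"] A B by auto
  have "(t1 - t3) * a + (t2 - t3) * b = 0" "(t1 - t3) * c + (t2 - t3) * d = 0"
    using t1 t2 t3 by (simp_all add: algebra_simps)
  then have "(a*d - b*c) * (t1 - t3) = 0" "(a*d - b*c) * (t2 - t3) = 0" by algebra+
  then have "t1 = t3" "t2 = t3" using assms(1) A by auto
  then show ?thesis using A B t1 t2 by (intro that[of t1]) simp
qed

lemma carrier_Aut_P1:
  "f \<in> carrier (Aut_P1 :: (('k::field \<times> 'k) set \<Rightarrow> _) monoid)
     \<longleftrightarrow> (\<exists>M :: 'k mat. mat_det M \<noteq> 0 \<and> f = mobius M)"
  unfolding Aut_P1_def by auto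

lemma mobius_in_carrier: "mat_det M \<noteq> 0 \<Longrightarrow> mobius M \<in> carrier Aut_P1"
  unfolding carrier_Aut_P1 by blast

lemma mult_Aut_P1_mobius:
  "mat_det B \<noteq> 0 \<Longrightarrow> mobius A \<otimes>\<^bsub>Aut_P1\<^esub> mobius B = mobius (mat_mult A B)"
  unfolding Aut_P1_def by (simp add: mobius_mult)

lemma one_Aut_P1: "\<one>\<^bsub>Aut_P1\<^esub> = mobius mat_one"
  unfolding Aut_P1_def by (simp add: mobius_one)

lemma group_Aut_P1: "group (Aut_P1 :: (('k::field \<times> 'k) set \<Rightarrow> _) monoid)"
proof (rule groupI)
  fix x y :: "('k \<times> 'k) set \<Rightarrow> _"
  assume "x \<in> carrier Aut_P1" "y \<in> carrier Aut_P1"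
  then obtain A B :: "'k mat" where "mat_det B \<noteq> 0" "mat_det (mat_mult A B) \<noteq> 0"
      "x = mobius A" "y = mobius B"
    by (auto simp: carrier_Aut_P1 mat_det_mult)
  then show "x \<otimes>\<^bsub>Aut_P1\<^esub> y \<in> carrier Aut_P1"
    by (simp add: mult_Aut_P1_mobius mobius_in_carrier)
next
  fix x y z :: "('k \<times> 'k) set \<Rightarrow> _"
  assume "x \<in> carrier Aut_P1" "y \<in> carrier Aut_P1" "z \<in> carrier Aut_P1"
  then obtain A B C :: "'k mat" where "mat_det B \<noteq> 0" "mat_det C \<noteq> 0"
      "x = mobius A" "y = mobius B" "z = mobius C"
    by (auto simp: carrier_Aut_P1)
  then show "x \<otimes>\<^bsub>Aut_P1\<^esub> y \<otimes>\<^bsub>Aut_P1\<^esub> z = x \<otimes>\<^bsub>Aut_P1\<^esub> (y \<otimes>\<^bsub>Aut_P1\<^esub> z)"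
    by (simp add: mult_Aut_P1_mobius mat_det_mult mat_mult_assoc)
next
  fix x :: "('k \<times> 'k) set \<Rightarrow> _"
  assume "x \<in> carrier Aut_P1"
  then obtain A :: "'k mat" where A: "mat_det A \<noteq> 0" "x = mobius A"
    by (auto simp: carrier_Aut_P1)
  then show "\<one>\<^bsub>Aut_P1\<^esub> \<otimes>\<^bsub>Aut_P1\<^esub> x = x"
    by (simp add: one_Aut_P1 mult_Aut_P1_mobius)
  have "mobius (mat_adj A) \<otimes>\<^bsub>Aut_P1\<^esub> x = \<one>\<^bsub>Aut_P1\<^esub>"
    using A by (simp add: mult_Aut_P1_mobius mat_adj_mult mobius_smult one_Aut_P1)
  then show "\<exists>y\<in>carrier Aut_P1. y \<otimes>\<^bsub>Aut_P1\<^esub> x = \<one>\<^bsub>Aut_P1\<^esub>"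
    using A mobius_in_carrier[of "mat_adj A"] by (auto simp: mat_det_adj)
qed (simp add: one_Aut_P1 mobius_in_carrier)

lemma mobius_pow:
  "mat_det M \<noteq> 0 \<Longrightarrow> mobius M [^]\<^bsub>Aut_P1\<^esub> n = mobius (mat_pow M n)"
  by (induction n) (simp_all add: one_Aut_P1 mult_Aut_P1_mobius)

lemma mobius_scalar: "a \<noteq> 0 \<Longrightarrow> mobius (a, 0, 0, a) = \<one>\<^bsub>Aut_P1\<^esub>"
  using mobius_smult[of a mat_one] by (simp add: mat_one_def one_Aut_P1)

lemma Aut_P1_mult_apply: "P \<in> P1 \<Longrightarrow> (g \<otimes>\<^bsub>Aut_P1\<^esub> h) P = g (h P)"
  unfolding Aut_P1_def by simp

lemma Aut_P1_one_apply: "P \<in> P1 \<Longrightarrow> \<one>\<^bsub>Aut_P1\<^esub> P = P"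
  unfolding Aut_P1_def by simp

lemma Aut_P1_apply_in_P1: "g \<in> carrier Aut_P1 \<Longrightarrow> P \<in> P1 \<Longrightarrow> g P \<in> P1"
  unfolding carrier_Aut_P1 using mobius_in_P1 by blast

lemma Aut_P1_inv_apply:
  assumes "g \<in> carrier Aut_P1" "P \<in> P1"
  shows "(inv\<^bsub>Aut_P1\<^esub> g) (g P) = P"
proof -
  interpret group Aut_P1 by (rule group_Aut_P1)
  have "(inv\<^bsub>Aut_P1\<^esub> g \<otimes>\<^bsub>Aut_P1\<^esub> g) P = P" using assms by (simp add: Aut_P1_one_apply)
  then show ?thesis using Aut_P1_mult_apply assms(2) by metis
qed

lemma Aut_P1_apply_inv:
  assumes "g \<in> carrier Aut_P1" "P \<in> P1"
  shows "g ((inv\<^bsub>Aut_P1\<^esub> g) P) = P"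
proof -
  interpret group Aut_P1 by (rule group_Aut_P1)
  have "(inv\<^bsub>Aut_P1\<^esub> (inv\<^bsub>Aut_P1\<^esub> g)) ((inv\<^bsub>Aut_P1\<^esub> g) P) = P"
    using assms by (intro Aut_P1_inv_apply) simp_all
  then show ?thesis using inv_inv[OF assms(1)] by (simp only:)
qed

lemma Aut_P1_apply_inj:
  assumes "g \<in> carrier Aut_P1" "P \<in> P1" "Q \<in> P1" "g P = g Q"
  shows "P = Q"
  using Aut_P1_inv_apply[OF assms(1,2)] Aut_P1_inv_apply[OF assms(1,3)] assms(4) by metis

lemma proj_pt_fixed_iff_eigenvector:
  assumes "mat_det M \<noteq> 0" "v \<noteq> (0, 0)"
  shows "proj_pt v \<in> fixed_points (mobius M) \<longleftrightarrow> (\<exists>t. mat_vec M v = vscale t v)"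
proof -
  have "proj_pt v \<in> fixed_points (mobius M) \<longleftrightarrow> proj_pt (mat_vec M v) = proj_pt v"
    using assms(2) unfolding fixed_points_def by (simp add: mobius_proj_pt)
  also have "\<dots> \<longleftrightarrow> (\<exists>t. mat_vec M v = vscale t v)"
  proof
    assume "\<exists>t. mat_vec M v = vscale t v"
    then obtain t where t: "mat_vec M v = vscale t v" by blast
    then have "t \<noteq> 0" using mat_vec_nonzero[OF assms] by auto
    then show "proj_pt (mat_vec M v) = proj_pt v" using t proj_pt_eq_iff by blast
  qed (auto simp: proj_pt_eq_iff)
  finally show ?thesis .
qed

lemma P1_not_singleton: "(P1 :: ('k::field \<times> 'k) set set) \<noteq> {P}"
proof
  assume "P1 = {P}"
  moreover have "proj_pt (1, 0) \<in> P1" "proj_pt (0, 1) \<in> P1" by simp_all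
  moreover have "proj_pt (1::'k, 0) \<noteq> proj_pt (0, 1)" by (simp add: proj_pt_neq_if_cross_ne_0)
  ultimately show False by blast
qed

lemma fixed_points_one: "fixed_points (\<one>\<^bsub>Aut_P1\<^esub>) = P1"
  unfolding fixed_points_def Aut_P1_def by auto

lemma one_not_parabolic: "\<not> parabolic (\<one>\<^bsub>Aut_P1\<^esub> :: ('k::field \<times> 'k) set \<Rightarrow> _)"
proof
  assume "parabolic (\<one>\<^bsub>Aut_P1\<^esub> :: ('k \<times> 'k) set \<Rightarrow> _)"
  then have "card (P1 :: ('k \<times> 'k) set set) = 1" unfolding parabolic_def fixed_points_one by blast
  then show False using P1_not_singleton by (elim card_1_singletonE) blast
qed

lemma parabolic_fixed_point:
  assumes "parabolic f"
  obtains P where "P \<in> P1" "fixed_points f = {P}"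
proof -
  have "card (fixed_points f) = 1" using assms unfolding parabolic_def by blast
  then obtain P where P: "fixed_points f = {P}" by (rule card_1_singletonE)
  then have "P \<in> P1" unfolding fixed_points_def by blast
  then show ?thesis using P that by blast
qed

lemma parabolicI: "f \<in> carrier Aut_P1 \<Longrightarrow> fixed_points f = {P} \<Longrightarrow> parabolic f"
  unfolding parabolic_def by simp

lemma commuting_preserves_fixed_points:
  assumes "g \<otimes>\<^bsub>Aut_P1\<^esub> h = h \<otimes>\<^bsub>Aut_P1\<^esub> g" "g \<in> carrier Aut_P1" "P \<in> fixed_points h"
  shows "g P \<in> fixed_points h"
proof -
  have "P \<in> P1" "h P = P" using assms(3) unfolding fixed_points_def by auto
  then have "h (g P) = g P" using assms(1) Aut_P1_mult_apply by metis
  then show ?thesis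
    using Aut_P1_apply_in_P1[OF assms(2) \<open>P \<in> P1\<close>] unfolding fixed_points_def by blast
qed

lemma fixed_points_conj:
  assumes "g \<in> carrier Aut_P1" "h \<in> carrier Aut_P1"
  shows "fixed_points (g \<otimes>\<^bsub>Aut_P1\<^esub> h \<otimes>\<^bsub>Aut_P1\<^esub> inv\<^bsub>Aut_P1\<^esub> g) = g ` fixed_points h"
proof -
  interpret group Aut_P1 by (rule group_Aut_P1)
  let ?g' = "inv\<^bsub>Aut_P1\<^esub> g"
  have g': "?g' \<in> carrier Aut_P1" using assms(1) by simp
  have apply_conj: "(g \<otimes>\<^bsub>Aut_P1\<^esub> h \<otimes>\<^bsub>Aut_P1\<^esub> ?g') Q = g (h (?g' Q))" if "Q \<in> P1" for Q
  proof -
    have "(g \<otimes>\<^bsub>Aut_P1\<^esub> h \<otimes>\<^bsub>Aut_P1\<^esub> ?g') Q = (g \<otimes>\<^bsub>Aut_P1\<^esub> h) (?g' Q)"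
      by (rule Aut_P1_mult_apply[OF that])
    also have "\<dots> = g (h (?g' Q))"
      by (rule Aut_P1_mult_apply[OF Aut_P1_apply_in_P1[OF g' that]])
    finally show ?thesis .
  qed
  show ?thesis
  proof (intro equalityI subsetI)
    fix Q assume "Q \<in> fixed_points (g \<otimes>\<^bsub>Aut_P1\<^esub> h \<otimes>\<^bsub>Aut_P1\<^esub> ?g')"
    then have Q: "Q \<in> P1" "g (h (?g' Q)) = Q"
      unfolding fixed_points_def mem_Collect_eq using apply_conj by auto
    have "h (?g' Q) \<in> P1" using Aut_P1_apply_in_P1 assms(2) g' Q(1) by blast
    then have "?g' (g (h (?g' Q))) = h (?g' Q)" by (rule Aut_P1_inv_apply[OF assms(1)])
    then have "h (?g' Q) = ?g' Q" unfolding Q(2) by (rule sym)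
    then have "?g' Q \<in> fixed_points h"
      using Aut_P1_apply_in_P1[OF g' Q(1)] unfolding fixed_points_def by blast
    moreover have "Q = g (?g' Q)" using Aut_P1_apply_inv[OF assms(1) Q(1)] by (rule sym)
    ultimately show "Q \<in> g ` fixed_points h" by blast
  next
    fix Q assume "Q \<in> g ` fixed_points h"
    then obtain R where R: "R \<in> P1" "h R = R" and Q: "Q = g R"
      unfolding fixed_points_def by blast
    have "Q \<in> P1" unfolding Q using Aut_P1_apply_in_P1[OF assms(1) R(1)] .
    moreover have "?g' Q = R" unfolding Q using Aut_P1_inv_apply[OF assms(1) R(1)] .
    ultimately show "Q \<in> fixed_points (g \<otimes>\<^bsub>Aut_P1\<^esub> h \<otimes>\<^bsub>Aut_P1\<^esub> ?g')"
      unfolding fixed_points_def using apply_conj R Q by simp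
  qed
qed

section \<open>Roots in an algebraically closed field\<close>

lemma char_poly_splits:
  fixes M :: "'k::field mat"
  assumes "alg_closed TYPE('k)"
  obtains la mu where "la + mu = mat_trace M" "la * mu = mat_det M"
proof -
  have "degree [:mat_det M, - mat_trace M, 1:] > 0" by simp
  then obtain x where "poly [:mat_det M, - mat_trace M, 1:] x = 0"
    using assms unfolding alg_closed_def by blast
  then have "x * (mat_trace M - x) = mat_det M" by (simp add: algebra_simps)
  then show ?thesis by (intro that[of x "mat_trace M - x"]) simp
qed

lemma nth_root_exists:
  fixes c :: "'k::field"
  assumes "alg_closed TYPE('k)" "n > 0"
  obtains x where "x ^ n = c"
proof -
  have "degree (monom 1 n + [:-c:]) = n"
    using assms(2) by (subst degree_add_eq_left) (simp_all add: degree_monom_eq)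
  then have "degree (monom 1 n + [:-c:]) > 0" using assms(2) by simp
  then obtain x where "poly (monom 1 n + [:-c:]) x = 0"
    using assms(1) unfolding alg_closed_def by blast
  then show ?thesis by (intro that[of x]) (simp add: poly_monom)
qed

text \<open>A root of \<open>(x\<^sup>l - 1) / (x - 1)\<close> is not 1: at 1 this quotient is the derivative \<open>l\<close> of \<open>x\<^sup>l - 1\<close>.\<close>
lemma nontrivial_root_of_unity_exists:
  fixes l :: nat
  assumes ac: "alg_closed TYPE('k::field)" and "l > 1" and "(of_nat l :: 'k) \<noteq> 0"
  obtains z :: "'k::field" where "z ^ l = 1" "z \<noteq> 1"
proof -
  let ?p = "monom (1::'k) l + [:-1:]"
  have deg: "degree ?p = l" using assms(2) by (subst degree_add_eq_left) (simp_all add: degree_monom_eq)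
  have "poly ?p 1 = 0" by (simp add: poly_monom)
  then have "[:-1, 1:] dvd ?p" using poly_eq_0_iff_dvd by metis
  then obtain g where g: "?p = [:-1, 1:] * g" by (elim dvdE)
  have "?p \<noteq> 0" using deg assms(2) by auto
  then have "g \<noteq> 0" using g by auto
  then have "degree ?p = 1 + degree g" using g degree_mult_eq[of "[:-1, 1:]" g] by simp
  then have "degree g > 0" using deg assms(2) by simp
  then obtain z where z: "poly g z = 0" using ac unfolding alg_closed_def by blast
  have "poly ?p z = 0" using g z by (metis mult_zero_right poly_mult)
  then have "z ^ l = 1" by (simp add: poly_monom)
  moreover have "z \<noteq> 1"
  proof
    assume "z = 1"
    have "pderiv ?p = [:-1, 1:] * pderiv g + g * pderiv [:-1, 1:]" using g pderiv_mult by metis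
    then have "poly (pderiv ?p) 1 = poly g 1" by (simp add: pderiv_pCons)
    moreover have "poly (pderiv ?p) 1 = of_nat l" by (simp add: pderiv_add pderiv_monom poly_monom)
    ultimately show False using z \<open>z = 1\<close> assms(3) by simp
  qed
  ultimately show ?thesis using that by blast
qed

section \<open>Classification of Moebius transformations\<close>

lemma char_poly_root:
  fixes M :: "'k::field mat"
  assumes "mat_vec M v = vscale t v" "v \<noteq> (0, 0)"
    and "la + mu = mat_trace M" "la * mu = mat_det M"
  shows "t = la \<or> t = mu"
proof -
  obtain a b c d where M: "M = (a, b, c, d)" by (cases M)
  have "mat_vec (a - t, b, c, d - t) v = (0, 0)" using assms(1) M by (cases v) (auto simp: algebra_simps)
  then have "mat_det (a - t, b, c, d - t) = 0" using mat_det_eq_0_if_kernel assms(2) by blast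
  then have "a*d - b*c - (a + d)*t + t*t = 0" by (simp add: algebra_simps)
  moreover have "la + mu = a + d" "la * mu = a*d - b*c" using assms(3,4) M by auto
  ultimately have "(t - la) * (t - mu) = 0" by algebra
  then show ?thesis by auto
qed

lemma eigenvector_iff_kernel:
  "mat_vec (a, b, c, d) v = vscale la v \<longleftrightarrow> mat_vec (a - la, b, c, d - la) v = (0, 0)"
  by (cases v) (auto simp: algebra_simps)

lemma eigenvector_exists:
  fixes M :: "'k::field mat"
  assumes "la + mu = mat_trace M" "la * mu = mat_det M"
  obtains v where "v \<noteq> (0, 0)" "mat_vec M v = vscale la v"
proof -
  obtain a b c d where M: "M = (a, b, c, d)" by (cases M)
  have "la + mu = a + d" "la * mu = a*d - b*c" using assms M by auto
  then have "(a - la) * (d - la) - b*c = 0" by algebra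
  then obtain v where "v \<noteq> (0, 0)" "mat_vec (a - la, b, c, d - la) v = (0, 0)"
    by (rule kernel_exists_if_mat_det_eq_0)
  then show ?thesis using that M eigenvector_iff_kernel by blast
qed

lemma eigenvectors_parallel:
  fixes M :: "'k::field mat"
  assumes "M \<noteq> (la, 0, 0, la)" "mat_vec M u = vscale la u" "mat_vec M w = vscale la w"
  shows "cross u w = 0"
proof -
  obtain a b c d where M: "M = (a, b, c, d)" by (cases M)
  have "(a - la, b, c, d - la) \<noteq> (0, 0, 0, 0)" using assms(1) M by auto
  moreover have "mat_vec (a - la, b, c, d - la) u = (0, 0)" "mat_vec (a - la, b, c, d - la) w = (0, 0)"
    using assms(2,3) M eigenvector_iff_kernel by blast+
  ultimately show ?thesis by (rule cross_eq_0_if_common_kernel)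
qed

lemma distinct_eigenvalues_cases:
  fixes M :: "'k::field mat"
  assumes "la \<noteq> mu" "la + mu = mat_trace M" "la * mu = mat_det M" "mat_det M \<noteq> 0"
  obtains v1 v2 where "mat_vec M v1 = vscale la v1" "mat_vec M v2 = vscale mu v2"
    "cross v1 v2 \<noteq> 0" "fixed_points (mobius M) = {proj_pt v1, proj_pt v2}"
proof -
  have nonscalar: "M \<noteq> (la, 0, 0, la)" "M \<noteq> (mu, 0, 0, mu)" using assms(1,2) by auto
  obtain v1 where v1: "v1 \<noteq> (0, 0)" "mat_vec M v1 = vscale la v1"
    using eigenvector_exists assms(2,3) by blast
  obtain v2 where v2: "v2 \<noteq> (0, 0)" "mat_vec M v2 = vscale mu v2"
    using eigenvector_exists[of mu la M] assms(2,3) by (auto simp: algebra_simps)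
  have "cross v1 v2 \<noteq> 0"
  proof
    assume "cross v1 v2 = 0"
    then obtain t where t: "v2 = vscale t v1" using cross_eq_0_imp_parallel v1(1) by blast
    then have "mat_vec M v2 = vscale la v2" using v1(2) by (simp add: mat_vec_scale algebra_simps)
    then have "vscale la v2 = vscale mu v2" using v2(2) by (rule subst)
    then show False using assms(1) v2(1) vscale_cancel by blast
  qed
  moreover have "fixed_points (mobius M) = {proj_pt v1, proj_pt v2}"
  proof (intro equalityI subsetI)
    fix P assume P: "P \<in> fixed_points (mobius M)"
    then obtain w where w: "w \<noteq> (0, 0)" "P = proj_pt w" unfolding fixed_points_def P1_iff by blast
    then obtain t where t: "mat_vec M w = vscale t w"
      using P proj_pt_fixed_iff_eigenvector assms(4) by blast
    then have "t = la \<or> t = mu" using char_poly_root w(1) assms(2,3) by blast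
    then have "cross v1 w = 0 \<or> cross v2 w = 0"
      using eigenvectors_parallel nonscalar v1(2) v2(2) t by blast
    then show "P \<in> {proj_pt v1, proj_pt v2}"
      using proj_pt_eq_if_cross_eq_0 v1(1) v2(1) w by blast
  qed (use v1 v2 proj_pt_fixed_iff_eigenvector assms(4) in blast)+
  ultimately show ?thesis using that v1(2) v2(2) by blast
qed

lemma traceless_kernel_form:
  fixes p q r v1 v2 :: "'k::field"
  assumes "p*v1 + q*v2 = 0" "r*v1 - p*v2 = 0" "(v1, v2) \<noteq> (0, 0)"
  obtains s where "p = s*v1*v2" "q = -(s*v1^2)" "r = s*v2^2"
proof (cases "v1 = 0")
  case True
  then have "v2 \<noteq> 0" "q = 0" "p = 0" using assms by auto
  then show ?thesis using True by (intro that[of "r/v2^2"]) (auto simp: field_simps)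
next
  case False
  have "r*v1^2 = -(q*v2^2)" using assms(1,2) by algebra
  moreover have "p = -(q*v2/v1)" using assms(1) False by (simp add: field_simps add_eq_0_iff)
  ultimately show ?thesis using False
    by (intro that[of "-(q/v1^2)"]) (auto simp: field_simps power2_eq_square)
qed

text \<open>The transvection \<open>w \<mapsto> w - c \<cdot> cross v w \<cdot> v\<close> along the vector \<open>v\<close>.\<close>
fun transvection :: "'k::field \<Rightarrow> 'k \<times> 'k \<Rightarrow> 'k mat" where
  "transvection c (v1, v2) = (1 + c*v1*v2, -(c*v1^2), c*v2^2, 1 - c*v1*v2)"

lemma mat_vec_transvection:
  "mat_vec (transvection c v) w = (fst w - c * cross v w * fst v, snd w - c * cross v w * snd v)"
  by (cases v, cases w) (simp add: algebra_simps power2_eq_square)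

lemma mat_det_transvection [simp]: "mat_det (transvection c v) = 1"
  by (cases v) (simp add: algebra_simps power2_eq_square)

lemma transvection_mult: "mat_mult (transvection a v) (transvection b v) = transvection (a + b) v"
  by (cases v) (simp add: algebra_simps power2_eq_square)

lemma mat_pow_transvection: "mat_pow (transvection c v) n = transvection (of_nat n * c) v"
  by (induction n) (cases v, simp_all add: mat_one_def transvection_mult algebra_simps)

lemma transvection_vscale: "transvection c (vscale t v) = transvection (c * t^2) v"
  by (cases v) (simp add: algebra_simps power2_eq_square)

lemma repeated_eigenvalue_cases:
  fixes M :: "'k::field mat"
  assumes "la + la = mat_trace M" "la * la = mat_det M" "mat_det M \<noteq> 0" "M \<noteq> (la, 0, 0, la)"
  obtains c v where "c \<noteq> 0" "v \<noteq> (0, 0)" "M = mat_smult la (transvection c v)"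
proof -
  obtain a b c d where M: "M = (a, b, c, d)" by (cases M)
  have la: "la \<noteq> 0" using assms(2,3) by auto
  have d: "d - la = -(a - la)" using assms(1) M by (simp add: algebra_simps)
  obtain v where v: "v \<noteq> (0, 0)" "mat_vec M v = vscale la v"
    using eigenvector_exists assms(1,2) by blast
  obtain v1 v2 where v12: "v = (v1, v2)" by (cases v)
  have "a*v1 + b*v2 = la*v1" "c*v1 + d*v2 = la*v2" using v(2) M v12 by auto
  then have "(a - la)*v1 + b*v2 = 0" "c*v1 - (a - la)*v2 = 0" using d by algebra+
  then obtain s where s: "a - la = s*v1*v2" "b = -(s*v1^2)" "c = s*v2^2"
    using traceless_kernel_form v(1) v12 by blast
  have "s \<noteq> 0" using assms(4) M s d by auto
  moreover have "M = mat_smult la (transvection (s / la) (v1, v2))"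
  proof -
    define t where "t = s / la"
    have "s = la * t" using la by (simp add: t_def)
    moreover have "d = la - s*v1*v2" using s(1) d by (simp add: algebra_simps)
    ultimately show ?thesis
      unfolding t_def[symmetric] using M s by (simp add: algebra_simps power2_eq_square)
  qed
  ultimately show ?thesis using that[of "s / la" "(v1, v2)"] la v(1) v12 by simp
qed

lemma mobius_cases:
  fixes M :: "'k::field mat"
  assumes "alg_closed TYPE('k)" and "mat_det M \<noteq> 0"
  obtains (identity) "mobius M = \<one>\<^bsub>Aut_P1\<^esub>"
  | (two_fixed_points) la mu v1 v2 where "la \<noteq> mu" "la * mu = mat_det M"
      "mat_vec M v1 = vscale la v1" "mat_vec M v2 = vscale mu v2" "cross v1 v2 \<noteq> 0"
      "fixed_points (mobius M) = {proj_pt v1, proj_pt v2}"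
  | (transvection) c v where "c \<noteq> 0" "v \<noteq> (0, 0)" "mobius M = mobius (transvection c v)"
proof -
  obtain la mu where lm: "la + mu = mat_trace M" "la * mu = mat_det M"
    using char_poly_splits assms(1) by blast
  show ?thesis
  proof (cases "la = mu")
    case False
    then show ?thesis
      using distinct_eigenvalues_cases[OF False lm assms(2)] two_fixed_points[OF False lm(2)] by blast
  next
    case True
    then have lm': "la + la = mat_trace M" "la * la = mat_det M" using lm by simp_all
    then have "la \<noteq> 0" using assms(2) by auto
    show ?thesis
    proof (cases "M = (la, 0, 0, la)")
      case True
      then show ?thesis using mobius_scalar[OF \<open>la \<noteq> 0\<close>] identity by simp
    next
      case False
      then obtain c v where "c \<noteq> 0" "v \<noteq> (0, 0)" "M = mat_smult la (transvection c v)"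
        using repeated_eigenvalue_cases[OF lm' assms(2)] by blast
      then show ?thesis using mobius_smult[OF \<open>la \<noteq> 0\<close>] transvection by simp
    qed
  qed
qed

lemma fixed_points_transvection:
  assumes "c \<noteq> 0" "v \<noteq> (0, 0)"
  shows "fixed_points (mobius (transvection c v)) = {proj_pt v}"
proof (intro equalityI subsetI)
  fix P assume P: "P \<in> fixed_points (mobius (transvection c v))"
  then obtain w where w: "w \<noteq> (0, 0)" "P = proj_pt w" unfolding fixed_points_def P1_iff by blast
  then obtain t where eig: "mat_vec (transvection c v) w = vscale t w"
    using P proj_pt_fixed_iff_eigenvector[of "transvection c v" w] by auto
  obtain v1 v2 where v: "v = (v1, v2)" by (cases v)
  obtain w1 w2 where w12: "w = (w1, w2)" by (cases w)
  define k where "k = v1*w2 - v2*w1"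
  have e: "w1 - c*k*v1 = t*w1" "w2 - c*k*v2 = t*w2"
    using eig[unfolded mat_vec_transvection] v w12 unfolding k_def by simp_all
  have "k = 0"
  proof (rule ccontr)
    assume "k \<noteq> 0"
    moreover have "(t - 1) * k = 0" using e unfolding k_def by algebra
    ultimately have "c*k*v1 = 0" "c*k*v2 = 0" using e by simp_all
    then show False using assms \<open>k \<noteq> 0\<close> v by auto
  qed
  then have "cross v w = 0" using v w12 k_def by simp
  then show "P \<in> {proj_pt v}" using proj_pt_eq_if_cross_eq_0 assms(2) w by blast
next
  fix P assume "P \<in> {proj_pt v}"
  have "mat_vec (transvection c v) v = vscale 1 v"
    unfolding mat_vec_transvection by (cases v) simp
  then have "proj_pt v \<in> fixed_points (mobius (transvection c v))"
    using proj_pt_fixed_iff_eigenvector[OF _ assms(2), of "transvection c v"] by (simp add: exI[of _ 1])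
  then show "P \<in> fixed_points (mobius (transvection c v))" using \<open>P \<in> {proj_pt v}\<close> by simp
qed

lemma parabolic_transvection: "c \<noteq> 0 \<Longrightarrow> v \<noteq> (0, 0) \<Longrightarrow> parabolic (mobius (transvection c v))"
  by (rule parabolicI[OF mobius_in_carrier fixed_points_transvection]) simp_all

lemma mobius_transvection_inj:
  fixes a b :: "'k::field"
  assumes "v \<noteq> (0, 0)" and "mobius (transvection a v) = mobius (transvection b v)"
  shows "a = b"
proof -
  obtain v1 v2 where v: "v = (v1, v2)" by (cases v)
  obtain t where "transvection b v = mat_smult t (transvection a v)"
    using mobius_eq_imp_smult assms(2) by (metis mat_det_transvection one_neq_zero)
  then have h: "1 + b*v1*v2 = t * (1 + a*v1*v2)" "b*v1^2 = t * (a*v1^2)" "b*v2^2 = t * (a*v2^2)"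
    using v by auto
  show ?thesis
  proof (cases "v1 = 0")
    case True
    then show ?thesis using h assms(1) v by auto
  next
    case False
    then have "b = t * a" using h(2) by auto
    then show ?thesis using h(1) by (simp add: algebra_simps)
  qed
qed

lemma parabolic_eq_transvection:
  assumes ac: "alg_closed TYPE('k::field)" and "parabolic (f :: ('k \<times> 'k) set \<Rightarrow> _)"
    and "fixed_points f = {proj_pt v}" "v \<noteq> (0, 0)"
  obtains c where "c \<noteq> 0" "f = mobius (transvection c v)"
proof -
  obtain M :: "'k mat" where M: "mat_det M \<noteq> 0" "f = mobius M"
    using assms(2) unfolding parabolic_def carrier_Aut_P1 by blast
  from ac M(1) show ?thesis
  proof (cases rule: mobius_cases)
    case identity
    then show ?thesis using assms(2) M(2) one_not_parabolic by metis
  next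
    case (two_fixed_points la mu v1 v2)
    then have "{proj_pt v1, proj_pt v2} = {proj_pt v}" using assms(3) M(2) by simp
    then have "proj_pt v1 = proj_pt v2" by blast
    then show ?thesis using two_fixed_points(5) proj_pt_neq_if_cross_ne_0 by blast
  next
    case (transvection c w)
    then have "{proj_pt w} = {proj_pt v}" using assms(3) M(2) fixed_points_transvection by metis
    then have "proj_pt w = proj_pt v" by simp
    then obtain t where t: "t \<noteq> 0" "w = vscale t v" using proj_pt_eq_iff by blast
    have "f = mobius (transvection (c * t^2) v)"
      using M(2) transvection(3) unfolding t(2) transvection_vscale by simp
    then show ?thesis using that[of "c * t^2"] transvection(1) t(1) by simp
  qed
qed

lemma Aut_P1_fixed_points_cases:
  assumes "alg_closed TYPE('k::field)" "h \<in> carrier (Aut_P1 :: (('k \<times> 'k) set \<Rightarrow> _) monoid)"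
  obtains (identity) "h = \<one>\<^bsub>Aut_P1\<^esub>"
  | (one_fixed_point) P where "fixed_points h = {P}"
  | (two_fixed_points) P Q where "P \<noteq> Q" "fixed_points h = {P, Q}"
proof -
  obtain M :: "'k mat" where M: "mat_det M \<noteq> 0" "h = mobius M"
    using assms(2) unfolding carrier_Aut_P1 by blast
  from assms(1) M(1) show ?thesis
  proof (cases rule: mobius_cases)
    case identity
    then show ?thesis using M(2) that(1) by simp
  next
    case (two_fixed_points la mu v1 v2)
    show ?thesis
      by (rule that(3)[of "proj_pt v1" "proj_pt v2"])
        (use two_fixed_points M(2) proj_pt_neq_if_cross_ne_0 in simp_all)
  next
    case (transvection c v)
    show ?thesis
      by (rule that(2)[of "proj_pt v"]) (use transvection M(2) fixed_points_transvection in simp)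
  qed
qed

lemma parabolics_with_common_fixed_point_commute:
  assumes ac: "alg_closed TYPE('k::field)"
    and "parabolic (f :: ('k \<times> 'k) set \<Rightarrow> _)" "fixed_points f = {P}"
    and "parabolic h" "fixed_points h = {P}"
  shows "f \<otimes>\<^bsub>Aut_P1\<^esub> h = h \<otimes>\<^bsub>Aut_P1\<^esub> f"
proof -
  have "P \<in> P1" using assms(3) unfolding fixed_points_def by blast
  then obtain v where v: "v \<noteq> (0, 0)" "P = proj_pt v" unfolding P1_iff by blast
  have "fixed_points f = {proj_pt v}" "fixed_points h = {proj_pt v}" using assms(3,5) v(2) by simp_all
  then obtain a b where a: "f = mobius (transvection a v)" and b: "h = mobius (transvection b v)"
    using parabolic_eq_transvection[OF ac assms(2) _ v(1)] parabolic_eq_transvection[OF ac assms(4) _ v(1)]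
    by metis
  have "f \<otimes>\<^bsub>Aut_P1\<^esub> h = mobius (transvection (a + b) v)"
    unfolding a b by (simp add: mult_Aut_P1_mobius transvection_mult)
  moreover have "h \<otimes>\<^bsub>Aut_P1\<^esub> f = mobius (transvection (b + a) v)"
    unfolding a b by (simp add: mult_Aut_P1_mobius transvection_mult)
  ultimately show ?thesis by (simp add: add.commute)
qed

section \<open>Centralisers and normalisers of parabolic elements\<close>

lemma centralizer_parabolic:
  assumes ac: "alg_closed TYPE('k::field)"
    and f: "parabolic (f :: ('k \<times> 'k) set \<Rightarrow> _)" "fixed_points f = {P}"
  shows "centralizer Aut_P1 {f} = {h \<in> carrier Aut_P1. h = \<one>\<^bsub>Aut_P1\<^esub> \<or> fixed_points h = {P}}"
proof (intro equalityI subsetI)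
  have fc: "f \<in> carrier Aut_P1" using f(1) unfolding parabolic_def by blast
  have P: "P \<in> P1" "f P = P" using f(2) unfolding fixed_points_def by auto
  fix h assume "h \<in> centralizer Aut_P1 {f}"
  then have h: "h \<in> carrier Aut_P1" "h \<otimes>\<^bsub>Aut_P1\<^esub> f = f \<otimes>\<^bsub>Aut_P1\<^esub> h"
    unfolding centralizer_def by auto
  have "h P \<in> fixed_points f" by (rule commuting_preserves_fixed_points[OF h(2,1)]) (simp add: f(2))
  then have "h P = P" using f(2) by blast
  then have hP: "P \<in> fixed_points h" using P(1) unfolding fixed_points_def by blast
  from ac h(1) have "h = \<one>\<^bsub>Aut_P1\<^esub> \<or> fixed_points h = {P}"
  proof (cases rule: Aut_P1_fixed_points_cases)
    case identity
    then show ?thesis by simp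
  next
    case (one_fixed_point Q)
    then show ?thesis using hP by simp
  next
    case (two_fixed_points Q R)
    then obtain S where S: "S \<in> fixed_points h" "S \<noteq> P" using hP by blast
    then have S_P1: "S \<in> P1" unfolding fixed_points_def by blast
    have "f S \<in> fixed_points h" by (rule commuting_preserves_fixed_points[OF h(2)[symmetric] fc S(1)])
    moreover have "fixed_points h = {P, S}" using two_fixed_points hP S(1,2) by fastforce
    ultimately have "f S = P \<or> f S = S" by simp
    moreover have "f S \<noteq> P" using Aut_P1_apply_inj[OF fc S_P1 P(1)] P(2) S(2) by metis
    ultimately have "S \<in> fixed_points f" using S_P1 unfolding fixed_points_def by simp
    then show ?thesis using S(2) f(2) by blast
  qed
  then show "h \<in> {h \<in> carrier Aut_P1. h = \<one>\<^bsub>Aut_P1\<^esub> \<or> fixed_points h = {P}}"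
    using h(1) by blast
next
  interpret group Aut_P1 by (rule group_Aut_P1)
  have fc: "f \<in> carrier Aut_P1" using f(1) unfolding parabolic_def by blast
  fix h assume "h \<in> {h \<in> carrier Aut_P1. h = \<one>\<^bsub>Aut_P1\<^esub> \<or> fixed_points h = {P}}"
  then have h: "h \<in> carrier Aut_P1" "h = \<one>\<^bsub>Aut_P1\<^esub> \<or> fixed_points h = {P}" by auto
  from h(2) have "h \<otimes>\<^bsub>Aut_P1\<^esub> f = f \<otimes>\<^bsub>Aut_P1\<^esub> h"
  proof
    assume hP: "fixed_points h = {P}"
    show ?thesis
      by (rule parabolics_with_common_fixed_point_commute[OF ac parabolicI[OF h(1) hP] hP f])
  qed (simp add: fc)
  then show "h \<in> centralizer Aut_P1 {f}" using h(1) unfolding centralizer_def by auto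
qed

lemma (in group) mem_normalizer_iff:
  assumes "S \<subseteq> carrier G"
  shows "g \<in> normalizer G S \<longleftrightarrow>
    g \<in> carrier G \<and> (\<forall>h\<in>S. g \<otimes> h \<otimes> inv g \<in> S \<and> inv g \<otimes> h \<otimes> g \<in> S)"
proof -
  have conj: "(g <#\<^bsub>G\<^esub> S) #> inv g = {g \<otimes> h \<otimes> inv g | h. h \<in> S}"
    unfolding l_coset_def r_coset_def by blast
  have cancel: "g \<otimes> (inv g \<otimes> h \<otimes> g) \<otimes> inv g = h" "inv g \<otimes> (g \<otimes> h \<otimes> inv g) \<otimes> g = h"
    if "g \<in> carrier G" "h \<in> S" for h
  proof -
    have "h \<in> carrier G" using that(2) assms by blast
    then show "g \<otimes> (inv g \<otimes> h \<otimes> g) \<otimes> inv g = h" "inv g \<otimes> (g \<otimes> h \<otimes> inv g) \<otimes> g = h"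
      using that(1) by (simp_all add: m_assoc) (simp_all add: m_assoc[symmetric])
  qed
  have "(g <#\<^bsub>G\<^esub> S) #> inv g = S \<longleftrightarrow> (\<forall>h\<in>S. g \<otimes> h \<otimes> inv g \<in> S \<and> inv g \<otimes> h \<otimes> g \<in> S)"
    if g: "g \<in> carrier G"
  proof
    assume eq: "(g <#\<^bsub>G\<^esub> S) #> inv g = S"
    show "\<forall>h\<in>S. g \<otimes> h \<otimes> inv g \<in> S \<and> inv g \<otimes> h \<otimes> g \<in> S"
    proof
      fix h assume h: "h \<in> S"
      then obtain k where "k \<in> S" "h = g \<otimes> k \<otimes> inv g" using eq conj by blast
      then have "inv g \<otimes> h \<otimes> g \<in> S" using cancel(2)[OF g] by simp
      then show "g \<otimes> h \<otimes> inv g \<in> S \<and> inv g \<otimes> h \<otimes> g \<in> S" using eq conj h by blast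
    qed
  next
    assume closed: "\<forall>h\<in>S. g \<otimes> h \<otimes> inv g \<in> S \<and> inv g \<otimes> h \<otimes> g \<in> S"
    have "h \<in> {g \<otimes> h \<otimes> inv g | h. h \<in> S}" if "h \<in> S" for h
      using closed that cancel(1)[OF g that] by (metis (mono_tags, lifting) mem_Collect_eq)
    then show "(g <#\<^bsub>G\<^esub> S) #> inv g = S" unfolding conj using closed by blast
  qed
  then show ?thesis using assms unfolding normalizer_def stabilizer_def by auto
qed

lemma normalizer_centralizer_parabolic:
  assumes ac: "alg_closed TYPE('k::field)"
    and f: "parabolic (f :: ('k \<times> 'k) set \<Rightarrow> _)" "fixed_points f = {P}"
  shows "normalizer Aut_P1 (centralizer Aut_P1 {f}) = stabilizer Aut_P1 (\<lambda>g. g) P"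
proof -
  interpret group Aut_P1 by (rule group_Aut_P1)
  define C where "C = {h \<in> carrier Aut_P1. h = \<one>\<^bsub>Aut_P1\<^esub> \<or> fixed_points h = {P}}"
  have C_sub: "C \<subseteq> carrier Aut_P1" unfolding C_def by blast
  have P: "P \<in> P1" using f(2) unfolding fixed_points_def by blast
  have fc: "f \<in> carrier Aut_P1" using f(1) unfolding parabolic_def by blast
  have conj_fixed: "fixed_points (g \<otimes>\<^bsub>Aut_P1\<^esub> h \<otimes>\<^bsub>Aut_P1\<^esub> inv\<^bsub>Aut_P1\<^esub> g) = {g P}"
    if "g \<in> carrier Aut_P1" "h \<in> carrier Aut_P1" "fixed_points h = {P}" for g h
    using fixed_points_conj[OF that(1,2)] that(3) by simp
  have conj_in_C: "g \<otimes>\<^bsub>Aut_P1\<^esub> h \<otimes>\<^bsub>Aut_P1\<^esub> inv\<^bsub>Aut_P1\<^esub> g \<in> C"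
    if g: "g \<in> carrier Aut_P1" "g P = P" and "h \<in> C" for g h
  proof -
    from \<open>h \<in> C\<close> have h: "h \<in> carrier Aut_P1" "h = \<one>\<^bsub>Aut_P1\<^esub> \<or> fixed_points h = {P}"
      unfolding C_def by auto
    from h(2) have "g \<otimes>\<^bsub>Aut_P1\<^esub> h \<otimes>\<^bsub>Aut_P1\<^esub> inv\<^bsub>Aut_P1\<^esub> g = \<one>\<^bsub>Aut_P1\<^esub>
        \<or> fixed_points (g \<otimes>\<^bsub>Aut_P1\<^esub> h \<otimes>\<^bsub>Aut_P1\<^esub> inv\<^bsub>Aut_P1\<^esub> g) = {P}"
    proof
      assume "h = \<one>\<^bsub>Aut_P1\<^esub>"
      then show ?thesis using g(1) by simp
    next
      assume "fixed_points h = {P}"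
      then show ?thesis using conj_fixed[OF g(1) h(1)] g(2) by simp
    qed
    moreover have "g \<otimes>\<^bsub>Aut_P1\<^esub> h \<otimes>\<^bsub>Aut_P1\<^esub> inv\<^bsub>Aut_P1\<^esub> g \<in> carrier Aut_P1"
      using g(1) h(1) by simp
    ultimately show ?thesis unfolding C_def by blast
  qed
  have "g \<in> normalizer Aut_P1 C \<longleftrightarrow> g \<in> carrier Aut_P1 \<and> g P = P" for g
  proof
    assume "g \<in> normalizer Aut_P1 C"
    moreover have "f \<in> C" using fc f(2) unfolding C_def by blast
    ultimately have g: "g \<in> carrier Aut_P1" "g \<otimes>\<^bsub>Aut_P1\<^esub> f \<otimes>\<^bsub>Aut_P1\<^esub> inv\<^bsub>Aut_P1\<^esub> g \<in> C"
      unfolding mem_normalizer_iff[OF C_sub] by auto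
    have fixed: "fixed_points (g \<otimes>\<^bsub>Aut_P1\<^esub> f \<otimes>\<^bsub>Aut_P1\<^esub> inv\<^bsub>Aut_P1\<^esub> g) = {g P}"
      by (rule conj_fixed[OF g(1) fc f(2)])
    have "g \<otimes>\<^bsub>Aut_P1\<^esub> f \<otimes>\<^bsub>Aut_P1\<^esub> inv\<^bsub>Aut_P1\<^esub> g \<noteq> \<one>\<^bsub>Aut_P1\<^esub>"
    proof
      assume "g \<otimes>\<^bsub>Aut_P1\<^esub> f \<otimes>\<^bsub>Aut_P1\<^esub> inv\<^bsub>Aut_P1\<^esub> g = \<one>\<^bsub>Aut_P1\<^esub>"
      then have "fixed_points \<one>\<^bsub>Aut_P1\<^esub> = {g P}" using fixed by simp
      then have "P1 = {g P}" unfolding fixed_points_one .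
      then show False using P1_not_singleton by blast
    qed
    then have "{g P} = {P}" using g(2) fixed unfolding C_def by simp
    then show "g \<in> carrier Aut_P1 \<and> g P = P" using g(1) by simp
  next
    assume g: "g \<in> carrier Aut_P1 \<and> g P = P"
    then have g': "inv\<^bsub>Aut_P1\<^esub> g \<in> carrier Aut_P1" "(inv\<^bsub>Aut_P1\<^esub> g) P = P"
      using Aut_P1_inv_apply[of g P] P by simp_all
    have "g \<otimes>\<^bsub>Aut_P1\<^esub> h \<otimes>\<^bsub>Aut_P1\<^esub> inv\<^bsub>Aut_P1\<^esub> g \<in> C
        \<and> inv\<^bsub>Aut_P1\<^esub> g \<otimes>\<^bsub>Aut_P1\<^esub> h \<otimes>\<^bsub>Aut_P1\<^esub> g \<in> C" if "h \<in> C" for h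
      using conj_in_C[OF g' that] conj_in_C[of g h] g that by simp
    then show "g \<in> normalizer Aut_P1 C" unfolding mem_normalizer_iff[OF C_sub] using g by blast
  qed
  then show ?thesis
    unfolding centralizer_parabolic[OF ac f] C_def[symmetric] stabilizer_def by (simp add: set_eq_iff)
qed

lemma point_stabilizer_iff_normalizer_centralizer_parabolic:
  assumes ac: "alg_closed TYPE('k::field)"
  shows "(\<exists>P \<in> P1. H = stabilizer (Aut_P1 :: (('k \<times> 'k) set \<Rightarrow> _) monoid) (\<lambda>g. g) P)
     \<longleftrightarrow> (\<exists>f. parabolic f \<and> H = normalizer Aut_P1 (centralizer Aut_P1 {f}))"
proof
  assume "\<exists>P \<in> P1. H = stabilizer (Aut_P1 :: (('k \<times> 'k) set \<Rightarrow> _) monoid) (\<lambda>g. g) P"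
  then obtain P where P: "P \<in> P1" "H = stabilizer Aut_P1 (\<lambda>g. g) P" by blast
  obtain v :: "'k \<times> 'k" where "v \<noteq> (0, 0)" "P = proj_pt v" using P(1) unfolding P1_iff by blast
  then have v: "v \<noteq> (0, 0)" "H = stabilizer Aut_P1 (\<lambda>g. g) (proj_pt v)" using P(2) by simp_all
  let ?f = "mobius (transvection 1 v)"
  have f: "parabolic ?f" "fixed_points ?f = {proj_pt v}"
    by (simp_all add: parabolic_transvection fixed_points_transvection v(1))
  then have "H = normalizer Aut_P1 (centralizer Aut_P1 {?f})"
    using normalizer_centralizer_parabolic[OF ac f] v(2) by simp
  then show "\<exists>f. parabolic f \<and> H = normalizer Aut_P1 (centralizer Aut_P1 {f})"
    using f(1) by blast
next
  assume "\<exists>f. parabolic f \<and> H = normalizer Aut_P1 (centralizer Aut_P1 {f})"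
  then obtain f :: "('k \<times> 'k) set \<Rightarrow> _"
    where f: "parabolic f" "H = normalizer Aut_P1 (centralizer Aut_P1 {f})" by blast
  obtain P where P: "P \<in> P1" "fixed_points f = {P}" using parabolic_fixed_point f(1) by blast
  have "H = stabilizer Aut_P1 (\<lambda>g. g) P"
    using normalizer_centralizer_parabolic[OF ac f(1) P(2)] f(2) by simp
  then show "\<exists>P \<in> P1. H = stabilizer Aut_P1 (\<lambda>g. g) P" using P(1) by blast
qed

section \<open>\<open>l\<close>-th roots of Moebius transformations\<close>

lemma not_uniquely_divisibleI:
  assumes "y1 \<noteq> y2" "y1 \<in> carrier G" "y2 \<in> carrier G" "y1 [^]\<^bsub>G\<^esub> n = x" "y2 [^]\<^bsub>G\<^esub> n = x"
  shows "\<not> uniquely_divisible G n x"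
  using assms unfolding uniquely_divisible_def by blast

lemma mobius_transvection_pow:
  "mobius (transvection c v) [^]\<^bsub>Aut_P1\<^esub> n = mobius (transvection (of_nat n * c) v)"
  by (simp add: mobius_pow mat_pow_transvection)

lemma parabolic_uniquely_divisible:
  fixes n :: nat
  assumes ac: "alg_closed TYPE('k::field)" and n: "(of_nat n :: 'k) \<noteq> 0"
    and f: "parabolic (f :: ('k \<times> 'k) set \<Rightarrow> _)"
  shows "uniquely_divisible Aut_P1 n f"
proof -
  interpret group Aut_P1 by (rule group_Aut_P1)
  obtain P where P: "P \<in> P1" "fixed_points f = {P}" using parabolic_fixed_point f by blast
  obtain v where v: "v \<noteq> (0, 0)" "P = proj_pt v" using P(1) unfolding P1_iff by blast
  with P(2) have fP: "fixed_points f = {proj_pt v}" by simp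
  obtain c where "c \<noteq> 0" and c: "f = mobius (transvection c v)"
    by (rule parabolic_eq_transvection[OF ac f fP v(1)])
  let ?root = "mobius (transvection (c / of_nat n) v)"
  have "?root [^]\<^bsub>Aut_P1\<^esub> n = f" using n c by (simp add: mobius_transvection_pow)
  moreover have "y = ?root" if y: "y \<in> carrier Aut_P1" "y [^]\<^bsub>Aut_P1\<^esub> n = f" for y
  proof -
    have "y \<otimes>\<^bsub>Aut_P1\<^esub> f = f \<otimes>\<^bsub>Aut_P1\<^esub> y"
      using nat_pow_Suc[of y n] nat_pow_Suc2[OF y(1), of n] y(2) by simp
    then have "y = \<one>\<^bsub>Aut_P1\<^esub> \<or> fixed_points y = {P}"
      using centralizer_parabolic[OF ac f P(2)] y(1) unfolding centralizer_def by blast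
    moreover have "y \<noteq> \<one>\<^bsub>Aut_P1\<^esub>" using y(2) f one_not_parabolic by force
    ultimately have yP: "fixed_points y = {proj_pt v}" using v(2) by simp
    obtain d where "d \<noteq> 0" and d: "y = mobius (transvection d v)"
      by (rule parabolic_eq_transvection[OF ac parabolicI[OF y(1) yP] yP v(1)])
    then have "of_nat n * d = c"
      using y(2) c mobius_transvection_inj[OF v(1)] by (simp add: mobius_transvection_pow)
    then have "d = c / of_nat n" using n by (simp add: field_simps)
    then show ?thesis using d by simp
  qed
  ultimately show ?thesis
    unfolding uniquely_divisible_def using mobius_in_carrier[of "transvection (c / of_nat n) v"] by auto
qed

lemma mat_pow_diag: "mat_pow (a, 0, 0, b) n = (a ^ n, 0, 0, b ^ n)"
  by (induction n) (simp_all add: mat_one_def algebra_simps)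

lemma one_not_uniquely_divisible:
  fixes z :: "'k::field"
  assumes "z ^ n = 1" "z \<noteq> 1" "n > 0"
  shows "\<not> uniquely_divisible (Aut_P1 :: (('k \<times> 'k) set \<Rightarrow> _) monoid) n \<one>\<^bsub>Aut_P1\<^esub>"
proof -
  interpret group Aut_P1 by (rule group_Aut_P1)
  have "z \<noteq> 0" using assms(1,3) by (cases "z = 0") (auto simp: power_0_left)
  then have d: "mat_det (z, 0, 0, 1) \<noteq> 0" by simp
  have "mobius (z, 0, 0, 1) [^]\<^bsub>Aut_P1\<^esub> n = \<one>\<^bsub>Aut_P1\<^esub>"
    using assms(1) by (simp add: mobius_pow[OF d] mat_pow_diag mat_one_def one_Aut_P1)
  moreover have "mobius (z, 0, 0, 1) \<noteq> \<one>\<^bsub>Aut_P1\<^esub>"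
  proof
    assume "mobius (z, 0, 0, 1) = \<one>\<^bsub>Aut_P1\<^esub>"
    then have "mobius (z, 0, 0, 1) (proj_pt (1, 1)) = proj_pt (1, 1)"
      by (simp add: Aut_P1_one_apply)
    then show False using assms(2) by (simp add: mobius_proj_pt proj_pt_neq_if_cross_ne_0)
  qed
  ultimately show ?thesis
    using not_uniquely_divisibleI mobius_in_carrier[OF d] by (metis one_closed nat_pow_one)
qed

fun mat_affine :: "'k::field \<Rightarrow> 'k \<Rightarrow> 'k mat \<Rightarrow> 'k mat" where
  "mat_affine s t (a, b, c, d) = (s*a + t, s*b, s*c, s*d + t)"

lemma mat_vec_affine_eigenvector:
  assumes "mat_vec M w = vscale la w"
  shows "mat_vec (mat_affine s t M) w = vscale (s * la + t) w"
proof -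
  obtain a b c d where M: "M = (a, b, c, d)" by (cases M)
  obtain x y where w: "w = (x, y)" by (cases w)
  have "a*x + b*y = la*x" "c*x + d*y = la*y" using assms M w by auto
  then have "(s*a + t)*x + s*b*y = (s*la + t)*x" "s*c*x + (s*d + t)*y = (s*la + t)*y" by algebra+
  then show ?thesis using M w by simp
qed

text \<open>The root is \<open>p(M)\<close> for the linear polynomial \<open>p\<close> with \<open>p(la) = r\<close> and \<open>p(mu) = q\<close>.\<close>
lemma root_with_prescribed_eigenvalues:
  fixes M :: "'k::field mat"
  assumes "la \<noteq> mu" "mat_det M \<noteq> 0" "cross v1 v2 \<noteq> 0"
    and "mat_vec M v1 = vscale la v1" "mat_vec M v2 = vscale mu v2"
    and "r ^ n = la" "q ^ n = mu" "n > 0"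
  obtains Y where "mat_pow Y n = M" "mat_det Y \<noteq> 0"
    "mat_vec Y v1 = vscale r v1" "mat_vec Y v2 = vscale q v2"
proof -
  define s where "s = (r - q) / (la - mu)"
  define t where "t = (q*la - r*mu) / (la - mu)"
  have "la - mu \<noteq> 0" using assms(1) by simp
  moreover have "(r - q) * la + (q*la - r*mu) = r * (la - mu)" "(r - q) * mu + (q*la - r*mu) = q * (la - mu)"
    by algebra+
  ultimately have "s * la + t = r" "s * mu + t = q"
    unfolding s_def t_def by (simp_all add: add_divide_distrib[symmetric])
  then have Y: "mat_vec (mat_affine s t M) v1 = vscale r v1" "mat_vec (mat_affine s t M) v2 = vscale q v2"
    using mat_vec_affine_eigenvector assms(4,5) by metis+
  have "mat_pow (mat_affine s t M) n = M"
    by (rule mat_eq_if_agree_on_basis[OF assms(3)])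
      (simp_all add: mat_vec_pow_eigenvector[OF Y(1)] mat_vec_pow_eigenvector[OF Y(2)] assms(4-7))
  moreover have "mat_det (mat_affine s t M) \<noteq> 0"
    using calculation assms(2,8) mat_det_pow[of "mat_affine s t M" n] by auto
  ultimately show ?thesis using that Y by blast
qed

lemma mobius_eq_imp_eigenvalue_ratio:
  assumes "mat_det A \<noteq> 0" "mobius A = mobius B" "v \<noteq> (0, 0)" "w \<noteq> (0, 0)"
    and "mat_vec A v = vscale a v" "mat_vec B v = vscale b v"
    and "mat_vec A w = vscale c w" "mat_vec B w = vscale d w"
  shows "a * d = b * c"
proof -
  obtain t where t: "B = mat_smult t A" using mobius_eq_imp_smult assms(1,2) by blast
  have "mat_vec B v = vscale (t * a) v" "mat_vec B w = vscale (t * c) w"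
    using assms(5,7) t by (simp_all add: mat_vec_smult mult.assoc)
  then have "vscale b v = vscale (t * a) v" "vscale d w = vscale (t * c) w"
    using assms(6,8) by (metis)+
  then have "b = t * a" "d = t * c" using assms(3,4) vscale_cancel by blast+
  then show ?thesis by simp
qed

lemma distinct_eigenvalues_not_uniquely_divisible:
  fixes M :: "'k::field mat" and z :: 'k
  assumes ac: "alg_closed TYPE('k)" and n: "n > 0" and z: "z ^ n = 1" "z \<noteq> 1"
    and M: "la \<noteq> mu" "la * mu = mat_det M" "mat_det M \<noteq> 0" "cross v1 v2 \<noteq> 0"
      "mat_vec M v1 = vscale la v1" "mat_vec M v2 = vscale mu v2"
  shows "\<not> uniquely_divisible Aut_P1 n (mobius M)"
proof -
  have v: "v1 \<noteq> (0, 0)" "v2 \<noteq> (0, 0)" using M(4) by (cases v1, cases v2, auto)+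
  obtain r q where r: "r ^ n = la" and q: "q ^ n = mu"
    using nth_root_exists[OF ac n] by metis
  have "r \<noteq> 0" "q \<noteq> 0" using r q n M(2,3) by (auto simp: power_0_left)
  have zr: "(z * r) ^ n = la" using z(1) r by (simp add: power_mult_distrib)
  obtain Y1 where Y1: "mat_pow Y1 n = M" "mat_det Y1 \<noteq> 0"
      "mat_vec Y1 v1 = vscale r v1" "mat_vec Y1 v2 = vscale q v2"
    using root_with_prescribed_eigenvalues[OF M(1,3,4,5,6) r q n] by blast
  obtain Y2 where Y2: "mat_pow Y2 n = M" "mat_det Y2 \<noteq> 0"
      "mat_vec Y2 v1 = vscale (z * r) v1" "mat_vec Y2 v2 = vscale q v2"
    using root_with_prescribed_eigenvalues[OF M(1,3,4,5,6) zr q n] by blast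
  have "mobius Y1 \<noteq> mobius Y2"
  proof
    assume "mobius Y1 = mobius Y2"
    then have "r * q = z * r * q"
      using mobius_eq_imp_eigenvalue_ratio[OF Y1(2) _ v Y1(3) Y2(3) Y1(4) Y2(4)] by blast
    then show False using \<open>r \<noteq> 0\<close> \<open>q \<noteq> 0\<close> z(2) by simp
  qed
  then show ?thesis
    by (rule not_uniquely_divisibleI[OF _ mobius_in_carrier[OF Y1(2)] mobius_in_carrier[OF Y2(2)]])
      (simp_all add: mobius_pow Y1(1,2) Y2(1,2))
qed

lemma not_parabolic_not_uniquely_divisible:
  fixes n :: nat
  assumes ac: "alg_closed TYPE('k::field)" and n: "n > 1" "(of_nat n :: 'k) \<noteq> 0"
    and f: "f \<in> carrier (Aut_P1 :: (('k \<times> 'k) set \<Rightarrow> _) monoid)" "\<not> parabolic f"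
  shows "\<not> uniquely_divisible Aut_P1 n f"
proof -
  obtain M :: "'k mat" where M: "mat_det M \<noteq> 0" "f = mobius M"
    using f(1) unfolding carrier_Aut_P1 by blast
  obtain z :: 'k where z: "z ^ n = 1" "z \<noteq> 1"
    using nontrivial_root_of_unity_exists[OF ac n] by blast
  from ac M(1) show ?thesis
  proof (cases rule: mobius_cases)
    case identity
    then show ?thesis using one_not_uniquely_divisible[OF z] n(1) M(2) by simp
  next
    case (two_fixed_points la mu v1 v2)
    then show ?thesis
      using distinct_eigenvalues_not_uniquely_divisible[OF ac _ z] n(1) M by simp
  next
    case (transvection c v)
    then have "parabolic f" using parabolic_transvection M(2) by simp
    then show ?thesis using f(2) by contradiction
  qed
qed

lemma of_nat_prime_neq_0:
  assumes "prime l" "l \<noteq> CHAR('k::field)"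
  shows "(of_nat l :: 'k) \<noteq> 0"
proof
  assume "(of_nat l :: 'k) = 0"
  then have "CHAR('k) dvd l" by (simp add: of_nat_eq_0_iff_char_dvd)
  then have "CHAR('k) = 1 \<or> CHAR('k) = l" using assms(1) prime_nat_iff by blast
  then show False using assms(2) by simp
qed

theorem mainTheorem14:
  fixes l :: nat
  assumes "alg_closed TYPE('k::field)"
    and "prime l" and "l \<noteq> CHAR('k)"
  shows "(\<forall>f \<in> carrier (Aut_P1 :: (('k \<times> 'k) set \<Rightarrow> ('k \<times> 'k) set) monoid).
            parabolic f \<longleftrightarrow> uniquely_divisible (Aut_P1 :: (('k \<times> 'k) set \<Rightarrow> ('k \<times> 'k) set) monoid) l f)
       \<and> (\<forall>H. subgroup H (Aut_P1 :: (('k \<times> 'k) set \<Rightarrow> ('k \<times> 'k) set) monoid) \<longrightarrow>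
            ((\<exists>P \<in> P1. H = stabilizer (Aut_P1 :: (('k \<times> 'k) set \<Rightarrow> ('k \<times> 'k) set) monoid) (\<lambda>g. g) P)
             \<longleftrightarrow> (\<exists>f. parabolic f \<and>
                   H = normalizer (Aut_P1 :: (('k \<times> 'k) set \<Rightarrow> ('k \<times> 'k) set) monoid)
                         (centralizer (Aut_P1 :: (('k \<times> 'k) set \<Rightarrow> ('k \<times> 'k) set) monoid) {f}))))"
proof (intro conjI ballI allI impI)
  have l: "l > 1" "(of_nat l :: 'k) \<noteq> 0"
    using assms(2,3) prime_gt_1_nat of_nat_prime_neq_0 by auto
  fix f :: "('k \<times> 'k) set \<Rightarrow> ('k \<times> 'k) set"
  assume "f \<in> carrier Aut_P1"
  then show "parabolic f \<longleftrightarrow> uniquely_divisible Aut_P1 l f"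
    using parabolic_uniquely_divisible[OF assms(1) l(2)]
      not_parabolic_not_uniquely_divisible[OF assms(1) l]
    by blast
next
  fix H :: "(('k \<times> 'k) set \<Rightarrow> ('k \<times> 'k) set) set"
  show "(\<exists>P \<in> P1. H = stabilizer Aut_P1 (\<lambda>g. g) P)
    \<longleftrightarrow> (\<exists>f. parabolic f \<and> H = normalizer Aut_P1 (centralizer Aut_P1 {f}))"
    by (rule point_stabilizer_iff_normalizer_centralizer_parabolic[OF assms(1)])
qed

end
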